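(* Let $\mathcal{H}_S$ (system) and $\mathcal{H}_B$ (bath) be Hilbert spaces (with all traces below finite, e.g. finite-dimensional). Let $H_S(s)$, $s\in[0,t]$, be a (possibly time-dependent) self-adjoint system Hamiltonian, $H_B$ a time-independent self-adjoint bath Hamiltonian, and $U_t$ any unitary on $\mathcal{H}_S\otimes\mathcal{H}_B$ (the evolution generated by $H_{\rm tot}(s)=H_S(s)\otimes\mathbb{1}_B+\mathbb{1}_S\otimes H_B+V(s)$ with an arbitrary interaction $V$). Fix $\beta>0$ and set $Z_S(s)={\rm Tr}[e^{-\beta H_S(s)}]$, $\tau_S(s)=e^{-\beta H_S(s)}/Z_S(s)$, $Z_B={\rm Tr}[e^{-\beta H_B}]$, $\tau_B=e^{-\beta H_B}/Z_B$, and $F_S(s)=-\beta^{-1}\ln Z_S(s)$, $\Delta F_S=F_S(t)-F_S(0)$. Let $\{|\epsilon\rangle\}$ be an orthonormal eigenbasis of $H_S(0)$, with $|\epsilon\rangle$ having eigenvalue $\epsilon$ (sums over $\epsilon$ run over this basis). Define the CPTP map $\Phi_t(\rho)={\rm Tr}_B[U_t(\rho\otimes\tau_B)U_t^\dagger]$, the trajectory energy change $\Delta\tilde E(\epsilon)={\rm Tr}[H_S(t)\Phi_t(|\epsilon\rangle\langle\epsilon|)]-\epsilon$, $\tilde Z_S(t)=\sum_\epsilon e^{-\beta{\rm Tr}[H_S(t)\Phi_t(|\epsilon\rangle\langle\epsilon|)]}$, the guessed state $$\Theta_{SB}(t)=\sum_\epsilon \frac{e^{-\beta{\rm Tr}[H_S(t)\Phi_t(|\epsilon\rangle\langle\epsilon|)]}}{\tilde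 Z_S(t)}\,U_t(|\epsilon\rangle\langle\epsilon|\otimes\tau_B)U_t^\dagger,$$ the guessed quantum heat $\langle\tilde Q\rangle_B={\rm Tr}[H_B\tau_B]-{\rm Tr}[(\mathbb{1}_S\otimes H_B)\Theta_{SB}(t)]$, and for each $\epsilon$ the guessed quantum work $\tilde W(\epsilon)=\Delta\tilde E(\epsilon)-\langle\tilde Q\rangle_B$. Writing $\langle f\rangle_{\tilde P}=\sum_\epsilon \frac{e^{-\beta\epsilon}}{Z_S(0)} f(\epsilon)$, one has $$\langle e^{-\beta\tilde W}\rangle_{\tilde P}=e^{-\beta\Delta F_S}\,e^{-D[\Theta_{SB}(t)\|\tau_S(t)\otimes\tau_B]},$$ where $D[\rho\|\sigma]={\rm Tr}[\rho\ln\rho]-{\rm Tr}[\rho\ln\sigma]$ is the quantum relative entropy.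
   Context: Physical interpretation: the system starts in $\tau_S(0)$ and the bath in $\tau_B$; an initial projective energy measurement of the system yields $\epsilon$ with probability $e^{-\beta\epsilon}/Z_S(0)$, after which the joint state $|\epsilon\rangle\langle\epsilon|\otimes\tau_B$ evolves under $U_t$. The average $\langle\cdot\rangle_{\tilde P}$ is with respect to the distribution $\tilde P(\Delta E)=\sum_\epsilon \frac{e^{-\beta\epsilon}}{Z_S(0)}\delta(\Delta E-\Delta\tilde E(\epsilon))$. The quantity $\langle\tilde Q\rangle_B$ is a constant (independent of $\epsilon$). *)

theory Defs
  imports "HOL-Analysis.Analysis"
begin

text \<open>Finite-dimensional quantum mechanics: a Hilbert space of dimension CARD('n) is
  modelled as complex^'n, operators as complex^'n^'n (HOL-Analysis matrices).
  The composite system S+B has index type 's \<times> 'b.\<close>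

definition cinner :: "complex^'n \<Rightarrow> complex^'n \<Rightarrow> complex" where
  "cinner x y = (\<Sum>i\<in>UNIV. cnj (x$i) * y$i)"

definition adjoint_mat :: "complex^'n^'m \<Rightarrow> complex^'m^'n" where
  "adjoint_mat A = (\<chi> i j. cnj (A$j$i))"

definition hermitian :: "complex^'n^'n \<Rightarrow> bool" where
  "hermitian A \<longleftrightarrow> adjoint_mat A = A"

definition unitary_mat :: "complex^'n^'n \<Rightarrow> bool" where
  "unitary_mat U \<longleftrightarrow> adjoint_mat U ** U = mat 1 \<and> U ** adjoint_mat U = mat 1"

definition ketbra :: "complex^'n \<Rightarrow> complex^'n \<Rightarrow> complex^'n^'n" where
  "ketbra x y = (\<chi> i j. x$i * cnj (y$j))"

definition orthonormal_family :: "('n \<Rightarrow> complex^'n) \<Rightarrow> bool" where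
  "orthonormal_family v \<longleftrightarrow> (\<forall>i j. cinner (v i) (v j) = (if i = j then 1 else 0))"

definition eigen_decomp :: "complex^'n^'n \<Rightarrow> ('n \<Rightarrow> complex^'n) \<Rightarrow> ('n \<Rightarrow> real) \<Rightarrow> bool" where
  "eigen_decomp A v l \<longleftrightarrow> orthonormal_family v \<and> (\<forall>i. A *v v i = complex_of_real (l i) *s v i)"

definition mat_fun :: "(real \<Rightarrow> real) \<Rightarrow> complex^'n^'n \<Rightarrow> complex^'n^'n" where
  "mat_fun f A = (let (v, l) = (SOME (v, l). eigen_decomp A v l)
                  in (\<chi> a b. \<Sum>i\<in>UNIV. complex_of_real (f (l i)) * v i $ a * cnj (v i $ b)))"

definition mat_exp :: "complex^'n^'n \<Rightarrow> complex^'n^'n" where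
  "mat_exp A = mat_fun exp A"

text \<open>Matrix logarithm; real ln has ln 0 = 0, giving the convention 0 ln 0 = 0.\<close>
definition mat_ln :: "complex^'n^'n \<Rightarrow> complex^'n^'n" where
  "mat_ln A = mat_fun ln A"

definition kron :: "complex^'n^'n \<Rightarrow> complex^'m::finite^'m \<Rightarrow> complex^('n \<times> 'm)^('n \<times> 'm)" where
  "kron A B = (\<chi> p q. A $ fst p $ fst q * B $ snd p $ snd q)"

definition ptrace_B :: "complex^('n \<times> 'm::finite)^('n \<times> 'm) \<Rightarrow> complex^'n^'n" where
  "ptrace_B R = (\<chi> i j. \<Sum>k\<in>UNIV. R $ (i, k) $ (j, k))"

definition partition_fn :: "real \<Rightarrow> complex^'n^'n \<Rightarrow> real" where
  "partition_fn \<beta> H = Re (trace (mat_exp ((- \<beta>) *\<^sub>R H)))"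

definition gibbs :: "real \<Rightarrow> complex^'n^'n \<Rightarrow> complex^'n^'n" where
  "gibbs \<beta> H = (1 / partition_fn \<beta> H) *\<^sub>R mat_exp ((- \<beta>) *\<^sub>R H)"

definition free_energy :: "real \<Rightarrow> complex^'n^'n \<Rightarrow> real" where
  "free_energy \<beta> H = - ln (partition_fn \<beta> H) / \<beta>"

definition rel_entropy :: "complex^'n^'n \<Rightarrow> complex^'n^'n \<Rightarrow> real" where
  "rel_entropy \<rho> \<sigma> = Re (trace (\<rho> ** mat_ln \<rho>)) - Re (trace (\<rho> ** mat_ln \<sigma>))"

definition channel :: "complex^('s::finite \<times> 'b::finite)^('s \<times> 'b) \<Rightarrow> complex^'b^'b \<Rightarrow> complex^'s^'s \<Rightarrow> complex^'s^'s" where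
  "channel U \<tau>B \<rho> = ptrace_B (U ** kron \<rho> \<tau>B ** adjoint_mat U)"

end

(* The guessed state Theta = U (rho (x) tau_B) U^dagger, where rho = sum_e p_e |e><e| carries
   the Boltzmann weights p_e = exp (-beta E_e) / Zt' of the energies E_e = Tr[H_S(t) Phi(|e><e|)],
   is diagonal in the rotated product basis U (e (x) w_k) with eigenvalues p_e q_k.  Hence
     Tr[Theta ln Theta] = sum_e p_e ln p_e + Tr[tau_B ln tau_B]
                        = -beta sum_e p_e E_e - ln Zt' - beta Tr[H_B tau_B] - ln Z_B.
   On the other side, tau_S(t) (x) tau_B is the Gibbs state of H_S(t) (x) 1 + 1 (x) H_B, so its
   logarithm is -beta (H_S(t) (x) 1 + 1 (x) H_B) - ln (Z_S(t) Z_B), and the partial trace turns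
   Tr[Theta (H_S(t) (x) 1)] back into sum_e p_e E_e.  These terms cancel, leaving
     D[Theta || tau_S(t) (x) tau_B] = ln Z_S(t) - ln Zt' - beta <Q>_B.
   In the average of exp (-beta W) the initial energies cancel, which gives
   Zt' exp (beta <Q>_B) / Z_S(0) = exp (-beta Delta F_S) exp (-D).
   Matrix exponentials and logarithms are handled through a spectral theorem for Hermitian
   matrices, obtained by maximising the Rayleigh quotient on invariant subspaces. *)

theory Submission
  imports Defs
begin

lemma scaleR_complex: "r *\<^sub>R (z::complex) = of_real r * z"
  by (simp add: scaleR_conv_of_real)

lemma cinner_commute: "cinner y x = cnj (cinner x y)"
  by (simp add: cinner_def mult.commute)

lemma cinner_add_right: "cinner x (y + z) = cinner x y + cinner x z"
  by (simp add: cinner_def distrib_left sum.distrib)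

lemma cinner_add_left: "cinner (x + y) z = cinner x z + cinner y z"
  by (simp add: cinner_def distrib_right sum.distrib)

lemma cinner_diff_right: "cinner x (y - z) = cinner x y - cinner x z"
  by (simp add: cinner_def right_diff_distrib sum_subtractf)

lemma cinner_smult_right: "cinner x (c *s y) = c * cinner x y"
  by (simp add: cinner_def sum_distrib_left ac_simps)

lemma cinner_smult_left: "cinner (c *s x) y = cnj c * cinner x y"
  by (simp add: cinner_def sum_distrib_left ac_simps)

lemma cinner_scaleR_right: "cinner x (r *\<^sub>R y) = of_real r * cinner x y"
  by (simp add: cinner_def sum_distrib_left ac_simps scaleR_complex)

lemma cinner_scaleR_left: "cinner (r *\<^sub>R x) y = of_real r * cinner x y"
  by (simp add: cinner_def sum_distrib_left ac_simps scaleR_complex)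

lemma cinner_sum_right: "cinner x (\<Sum>i\<in>S. f i) = (\<Sum>i\<in>S. cinner x (f i))"
  by (simp add: cinner_def sum_distrib_left sum_component) (rule sum.swap)

lemma cinner_zero_right [simp]: "cinner x 0 = 0"
  by (simp add: cinner_def)

lemma cinner_self: "cinner x x = of_real ((norm x)\<^sup>2)"
proof -
  have "(norm x)\<^sup>2 = (\<Sum>i\<in>UNIV. (norm (x $ i))\<^sup>2)"
    unfolding norm_vec_def L2_set_def by (simp add: sum_nonneg)
  then have "of_real ((norm x)\<^sup>2) = (\<Sum>i\<in>UNIV. complex_of_real ((norm (x $ i))\<^sup>2))"
    by simp
  then show ?thesis
    unfolding cinner_def complex_norm_square by (simp add: mult.commute)
qed

lemma cinner_adjoint: "cinner (A *v x) y = cinner x (adjoint_mat A *v y)"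
  by (simp add: cinner_def adjoint_mat_def matrix_vector_mult_def sum_distrib_left
      sum_distrib_right ac_simps) (subst sum.swap, simp add: ac_simps)

lemma hermitian_cinner: "hermitian A \<Longrightarrow> cinner (A *v x) y = cinner x (A *v y)"
  by (simp add: cinner_adjoint hermitian_def)

lemma hermitian_cinner_real:
  "hermitian A \<Longrightarrow> cinner x (A *v x) = of_real (Re (cinner x (A *v x)))"
proof -
  assume "hermitian A"
  then have "cnj (cinner x (A *v x)) = cinner x (A *v x)"
    by (metis cinner_commute hermitian_cinner)
  then show ?thesis by (simp add: complex_eq_iff)
qed

lemma unitary_cinner: "unitary_mat U \<Longrightarrow> cinner (U *v x) (U *v y) = cinner x y"
  by (simp add: cinner_adjoint unitary_mat_def matrix_vector_mul_assoc)

lemma of_real_smult: "complex_of_real r *s x = r *\<^sub>R x"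
  by (simp add: vec_eq_iff scaleR_complex)

lemma matrix_vector_mult_smult: "(A::complex^'n^'m) *v (c *s x) = c *s (A *v x)"
  by (simp add: vec_eq_iff matrix_vector_mult_def sum_distrib_left ac_simps)

lemma matrix_vector_mult_scaleR_complex: "(A::complex^'n^'m) *v (r *\<^sub>R x) = r *\<^sub>R (A *v x)"
  by (simp add: vec_eq_iff matrix_vector_mult_def sum_distrib_left scaleR_complex ac_simps)

lemma scaleR_matrix_vector_mult: "(r *\<^sub>R (A::complex^'n^'m)) *v x = r *\<^sub>R (A *v x)"
  by (simp add: vec_eq_iff matrix_vector_mult_def sum_distrib_left scaleR_complex ac_simps)

lemma sum_matrix_vector_mult: "(\<Sum>i\<in>S. A i) *v x = (\<Sum>i\<in>S. A i *v x)"
  by (induction S rule: infinite_finite_induct) (auto simp: matrix_vector_mult_add_rdistrib)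

lemma matrix_mult_sum_right: "M ** (\<Sum>i\<in>S. A i) = (\<Sum>i\<in>S. M ** A i)"
  by (induction S rule: infinite_finite_induct) (auto simp: matrix_add_ldistrib)

lemma matrix_mult_sum_left: "(\<Sum>i\<in>S. A i) ** M = (\<Sum>i\<in>S. A i ** M)"
proof (induction S rule: infinite_finite_induct)
  case (insert x F)
  then show ?case
    by (simp add: vec_eq_iff matrix_matrix_mult_def distrib_right sum.distrib)
qed auto

lemma unitary_adjoint_mult_vec: "unitary_mat U \<Longrightarrow> adjoint_mat U *v (U *v x) = x"
  by (simp add: unitary_mat_def matrix_vector_mul_assoc)

lemma unitary_conj_trace: "unitary_mat U \<Longrightarrow> trace (U ** X ** adjoint_mat U) = trace X"
  by (metis matrix_mul_assoc matrix_mul_lid trace_mul_sym unitary_mat_def)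

lemma trace_scaleR: "trace (r *\<^sub>R (A::complex^'n^'n)) = r *\<^sub>R trace A"
  by (simp add: trace_def scaleR_sum_right)

lemma trace_sum: "trace (\<Sum>i\<in>S. (A i::complex^'n^'n)) = (\<Sum>i\<in>S. trace (A i))"
  by (induction S rule: infinite_finite_induct) (auto simp: trace_add trace_0[unfolded mat_0])

lemma ketbra_mult_vec: "ketbra x y *v z = cinner y z *s x"
  by (simp add: vec_eq_iff ketbra_def cinner_def matrix_vector_mult_def sum_distrib_left ac_simps)

lemma matrix_mult_ketbra: "M ** ketbra x y = ketbra (M *v x) y"
  by (simp add: vec_eq_iff ketbra_def matrix_matrix_mult_def matrix_vector_mult_def
      sum_distrib_right sum_distrib_left ac_simps)

lemma ketbra_scaleR_left: "ketbra (r *\<^sub>R x) y = r *\<^sub>R ketbra x y"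
  by (simp add: vec_eq_iff ketbra_def scaleR_complex mult.assoc)

lemma trace_ketbra: "trace (ketbra x y) = cinner y x"
  by (simp add: trace_def ketbra_def cinner_def mult.commute)

lemma trace_mult_ketbra: "trace (M ** ketbra x y) = cinner y (M *v x)"
  by (simp add: matrix_mult_ketbra trace_ketbra)

section \<open>Spectral decompositions and the functional calculus\<close>

definition spectral_op :: "('i::finite \<Rightarrow> real) \<Rightarrow> ('i \<Rightarrow> complex^'n) \<Rightarrow> complex^'n^'n" where
  "spectral_op c v = (\<Sum>i\<in>UNIV. c i *\<^sub>R ketbra (v i) (v i))"

lemma spectral_op_mult_vec: "spectral_op c v *v x = (\<Sum>i\<in>UNIV. (c i * cinner (v i) x) *s v i)"
  by (simp add: spectral_op_def sum_matrix_vector_mult scaleR_matrix_vector_mult ketbra_mult_vec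
      of_real_smult[symmetric] vector_smult_assoc)

lemma orthonormal_family_sum_ketbra:
  fixes v :: "'n::finite \<Rightarrow> complex^'n"
  assumes "orthonormal_family v"
  shows "(\<Sum>i\<in>UNIV. ketbra (v i) (v i)) = mat 1"
proof -
  define V :: "complex^'n^'n" where "V = (\<chi> a i. v i $ a)"
  have "adjoint_mat V ** V = mat 1"
    using assms unfolding orthonormal_family_def
    by (simp add: vec_eq_iff V_def adjoint_mat_def matrix_matrix_mult_def mat_def cinner_def)
  then have "V ** adjoint_mat V = mat 1"
    using matrix_left_right_inverse by blast
  then show ?thesis
    by (simp add: vec_eq_iff V_def adjoint_mat_def matrix_matrix_mult_def sum_component ketbra_def)
qed

lemma spectral_op_const:
  fixes v :: "'n::finite \<Rightarrow> complex^'n"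
  assumes "orthonormal_family v"
  shows "spectral_op (\<lambda>_. r) v = r *\<^sub>R mat 1"
  by (simp add: spectral_op_def scaleR_sum_right[symmetric] orthonormal_family_sum_ketbra[OF assms])

lemma spectral_op_affine:
  fixes v :: "'n::finite \<Rightarrow> complex^'n"
  assumes "orthonormal_family v"
  shows "spectral_op (\<lambda>i. r * c i + d) v = r *\<^sub>R spectral_op c v + d *\<^sub>R mat 1"
  by (simp add: spectral_op_def scaleR_add_left sum.distrib scaleR_sum_right
      spectral_op_const[OF assms, unfolded spectral_op_def, symmetric])

lemma spectral_op_mult_basis:
  assumes "orthonormal_family v"
  shows "spectral_op c v *v v j = c j *\<^sub>R v j"
proof -
  have "spectral_op c v *v v j = (\<Sum>i\<in>UNIV. if i = j then c j *\<^sub>R v j else 0)"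
    using assms unfolding spectral_op_mult_vec orthonormal_family_def
    by (intro sum.cong) (auto simp: of_real_smult)
  then show ?thesis by simp
qed

lemma eigen_decomp_spectral_op:
  "orthonormal_family v \<Longrightarrow> eigen_decomp (spectral_op c v) v c"
  by (simp add: eigen_decomp_def spectral_op_mult_basis of_real_smult)

lemma eigen_decomp_imp_spectral_op:
  fixes v :: "'n::finite \<Rightarrow> complex^'n"
  assumes "eigen_decomp A v l"
  shows "A = spectral_op l v"
proof -
  have o: "orthonormal_family v" and ev: "\<And>i. A *v v i = complex_of_real (l i) *s v i"
    using assms unfolding eigen_decomp_def by auto
  have "A = (\<Sum>i\<in>UNIV. A ** ketbra (v i) (v i))"
    by (simp add: orthonormal_family_sum_ketbra[OF o] flip: matrix_mult_sum_right)
  also have "\<dots> = spectral_op l v"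
    by (simp add: spectral_op_def matrix_mult_ketbra ev of_real_smult ketbra_scaleR_left)
  finally show ?thesis .
qed

lemma cinner_basis_spectral_op:
  assumes "orthonormal_family v"
  shows "cinner (v i) (spectral_op c v *v x) = c i * cinner (v i) x"
proof -
  have "cinner (v i) (spectral_op c v *v x) =
      (\<Sum>k\<in>UNIV. complex_of_real (c k) * cinner (v k) x * (if i = k then 1 else 0))"
    using assms unfolding spectral_op_mult_vec orthonormal_family_def
    by (simp add: cinner_sum_right cinner_smult_right)
  then show ?thesis by (simp add: if_distrib cong: if_cong)
qed

lemma orthonormal_family_expansion:
  fixes v :: "'n::finite \<Rightarrow> complex^'n"
  assumes "orthonormal_family v"
  shows "(\<Sum>i\<in>UNIV. cinner (v i) x *s v i) = x"
  using spectral_op_mult_vec[of "\<lambda>_. 1" v x] by (simp add: spectral_op_const[OF assms])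

text \<open>\<open>mat_fun\<close> picks its eigenbasis with \<open>SOME\<close>; it is usable only because the result
  does not depend on the basis, which holds since eigenvectors for different eigenvalues
  are orthogonal.\<close>

lemma spectral_op_fun_unique:
  fixes v w :: "'n::finite \<Rightarrow> complex^'n"
  assumes ev: "eigen_decomp A v l" and ew: "eigen_decomp A w m"
  shows "spectral_op (\<lambda>i. f (l i)) v = spectral_op (\<lambda>i. f (m i)) w"
proof -
  have ov: "orthonormal_family v" and ow: "orthonormal_family w"
    and Aw: "\<And>j. A *v w j = complex_of_real (m j) *s w j"
    using ev ew unfolding eigen_decomp_def by auto
  have overlap: "f (l i) * cinner (v i) (w j) = f (m j) * cinner (v i) (w j)" for i j
  proof -
    have "complex_of_real (l i) * cinner (v i) (w j) = complex_of_real (m j) * cinner (v i) (w j)"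
      using cinner_basis_spectral_op[OF ov, of i l "w j"]
      by (auto simp add: eigen_decomp_imp_spectral_op[OF ev, symmetric] Aw cinner_smult_right)
    then have "(complex_of_real (l i) - complex_of_real (m j)) * cinner (v i) (w j) = 0"
      by (simp add: algebra_simps)
    then have "l i = m j \<or> cinner (v i) (w j) = 0"
      by simp
    then show ?thesis
      by (elim disjE) simp_all
  qed
  have "spectral_op (\<lambda>i. f (l i)) v *v w j = complex_of_real (f (m j)) *s w j" for j
  proof -
    have "spectral_op (\<lambda>i. f (l i)) v *v w j
        = (\<Sum>i\<in>UNIV. complex_of_real (f (m j)) *s (cinner (v i) (w j) *s v i))"
      unfolding spectral_op_mult_vec by (simp add: vector_smult_assoc overlap)
    also have "\<dots> = complex_of_real (f (m j)) *s (\<Sum>i\<in>UNIV. cinner (v i) (w j) *s v i)"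
      by (simp only: vec.scale_sum_right)
    also have "\<dots> = complex_of_real (f (m j)) *s w j"
      by (simp only: orthonormal_family_expansion[OF ov])
    finally show ?thesis .
  qed
  then have "eigen_decomp (spectral_op (\<lambda>i. f (l i)) v) w (\<lambda>i. f (m i))"
    using ow by (simp add: eigen_decomp_def)
  then show ?thesis by (rule eigen_decomp_imp_spectral_op)
qed

lemma mat_fun_eq_spectral_op:
  fixes v :: "'n::finite \<Rightarrow> complex^'n"
  assumes "eigen_decomp A v l"
  shows "mat_fun f A = spectral_op (\<lambda>i. f (l i)) v"
proof -
  obtain v' l' where vl: "(SOME (v, l). eigen_decomp A v l) = (v', l')"
    by (cases "SOME (v, l). eigen_decomp A v l")
  have "\<exists>p. case p of (v, l) \<Rightarrow> eigen_decomp A v l"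
    using assms by auto
  then have "case SOME p. (case p of (v, l) \<Rightarrow> eigen_decomp A v l) of (v, l) \<Rightarrow> eigen_decomp A v l"
    by (rule someI_ex)
  then have "eigen_decomp A v' l'"
    using vl by simp
  moreover have "mat_fun f A = spectral_op (\<lambda>i. f (l' i)) v'"
    unfolding mat_fun_def vl
    by (simp add: vec_eq_iff spectral_op_def sum_component ketbra_def scaleR_complex mult.assoc)
  ultimately show ?thesis
    using spectral_op_fun_unique[OF _ assms] by metis
qed

lemma trace_spectral_op:
  "orthonormal_family v \<Longrightarrow> trace (spectral_op c v) = of_real (\<Sum>i\<in>UNIV. c i)"
  by (simp add: spectral_op_def trace_sum trace_scaleR trace_ketbra orthonormal_family_def
      scaleR_complex)

lemma trace_mult_spectral_op:
  "trace (X ** spectral_op c u) = (\<Sum>j\<in>UNIV. of_real (c j) * cinner (u j) (X *v u j))"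
  by (simp add: spectral_op_def matrix_mult_sum_right matrix_scalar_ac trace_sum
      trace_scaleR trace_mult_ketbra scaleR_complex scaleR_matrix_vector_mult cinner_scaleR_right)

lemma trace_eq_sum_eigenvalues:
  "eigen_decomp A v l \<Longrightarrow> trace A = of_real (\<Sum>i\<in>UNIV. l i)"
proof -
  assume ev: "eigen_decomp A v l"
  then have "A = spectral_op l v"
    by (rule eigen_decomp_imp_spectral_op)
  with ev show ?thesis
    by (simp add: trace_spectral_op eigen_decomp_def)
qed

lemma trace_mult_spectral_op_eigen:
  assumes "eigen_decomp X u p"
  shows "trace (X ** spectral_op c u) = of_real (\<Sum>j\<in>UNIV. c j * p j)"
  using assms unfolding trace_mult_spectral_op eigen_decomp_def orthonormal_family_def
  by (simp add: cinner_smult_right)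

lemma trace_mult_mat_ln_self:
  "eigen_decomp \<rho> u p \<Longrightarrow> Re (trace (\<rho> ** mat_ln \<rho>)) = (\<Sum>j\<in>UNIV. p j * ln (p j))"
  by (simp add: mat_ln_def mat_fun_eq_spectral_op trace_mult_spectral_op_eigen mult.commute)

lemma eigen_decomp_scaleR:
  "eigen_decomp H v l \<Longrightarrow> eigen_decomp (r *\<^sub>R H) v (\<lambda>i. r * l i)"
  unfolding eigen_decomp_def by (auto simp: scaleR_matrix_vector_mult vec_eq_iff scaleR_complex)

lemma mat_exp_scaleR_eq_spectral_op:
  "eigen_decomp H v l \<Longrightarrow> mat_exp (r *\<^sub>R H) = spectral_op (\<lambda>i. exp (r * l i)) v"
  unfolding mat_exp_def by (rule mat_fun_eq_spectral_op[OF eigen_decomp_scaleR])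

section \<open>The spectral theorem for Hermitian matrices\<close>

lemma subspace_orthogonal_to_family: "subspace {x. \<forall>j\<in>T. cinner (v j) x = 0}"
  by (simp add: subspace_def cinner_add_right cinner_scaleR_right)

lemma quadratic_form_scaleR:
  "Re (cinner (r *\<^sub>R z) (A *v (r *\<^sub>R z))) = r\<^sup>2 * Re (cinner z (A *v z))"
  by (simp add: matrix_vector_mult_scaleR_complex cinner_scaleR_left cinner_scaleR_right
      power2_eq_square)

lemma quadratic_form_attains_max:
  fixes A :: "complex^'n::finite^'n"
  assumes S: "subspace S" and "x1 \<in> S" "x1 \<noteq> 0"
  obtains x0 where "x0 \<in> S" "norm x0 = 1"
    "\<And>z. z \<in> S \<Longrightarrow> Re (cinner z (A *v z)) \<le> Re (cinner x0 (A *v x0)) * (norm z)\<^sup>2"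
proof -
  define f where "f z = Re (cinner z (A *v z))" for z
  define K where "K = S \<inter> sphere 0 1"
  have "compact K"
    unfolding K_def using closed_subspace[OF S] by (intro closed_Int_compact) auto
  moreover have "(1 / norm x1) *\<^sub>R x1 \<in> K"
    using assms by (simp add: K_def subspace_scale)
  moreover have "continuous_on K f"
    unfolding f_def cinner_def by (intro continuous_intros)
  ultimately obtain x0 where x0: "x0 \<in> K" and max: "\<And>y. y \<in> K \<Longrightarrow> f y \<le> f x0"
    using continuous_attains_sup[of K f] by blast
  have bound: "f z \<le> f x0 * (norm z)\<^sup>2" if "z \<in> S" for z
  proof (cases "z = 0")
    case False
    then have "(1 / norm z) *\<^sub>R z \<in> K"
      using that S by (simp add: K_def subspace_scale)
    then have "f ((1 / norm z) *\<^sub>R z) \<le> f x0"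
      by (rule max)
    then have "(1 / norm z)\<^sup>2 * f z \<le> f x0"
      by (simp only: f_def quadratic_form_scaleR)
    then show ?thesis
      using False by (simp add: power_divide divide_le_eq mult.commute)
  qed (simp add: f_def)
  from x0 have "x0 \<in> S" "norm x0 = 1"
    by (auto simp: K_def)
  then show ?thesis
    using that bound unfolding f_def by blast
qed

lemma nonpos_if_linear_le_quadratic:
  fixes b k :: real
  assumes "\<And>t. t > 0 \<Longrightarrow> b * t \<le> k * t\<^sup>2"
  shows "b \<le> 0"
proof (rule ccontr)
  assume "\<not> b \<le> 0"
  define t where "t = b / (\<bar>k\<bar> + 1)"
  have "t > 0" "t * (\<bar>k\<bar> + 1) = b"
    using \<open>\<not> b \<le> 0\<close> by (simp_all add: t_def)
  have "b * t \<le> \<bar>k\<bar> * t * t"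
    using assms[OF \<open>t > 0\<close>] \<open>t > 0\<close>
    by (simp add: power2_eq_square) (metis abs_ge_self mult_right_mono order.trans less_imp_le)
  then have "b \<le> \<bar>k\<bar> * t"
    using \<open>t > 0\<close> by simp
  then show False
    using \<open>t * (\<bar>k\<bar> + 1) = b\<close> \<open>t > 0\<close> by (simp add: algebra_simps)
qed

lemma hermitian_quadratic_form_add:
  assumes "hermitian A"
  shows "Re (cinner (x + t *\<^sub>R y) (A *v (x + t *\<^sub>R y))) =
    Re (cinner x (A *v x)) + 2 * t * Re (cinner y (A *v x)) + t\<^sup>2 * Re (cinner y (A *v y))"
proof -
  have "cinner x (A *v y) = cnj (cinner y (A *v x))"
    using cinner_commute[of "A *v x" y] by (simp add: hermitian_cinner[OF assms])
  then show ?thesis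
    by (simp add: matrix_vector_right_distrib matrix_vector_mult_scaleR_complex cinner_add_left
        cinner_add_right cinner_scaleR_left cinner_scaleR_right power2_eq_square algebra_simps)
qed

lemma norm_add_scaleR_orthogonal:
  assumes "cinner x y = 0"
  shows "(norm (x + t *\<^sub>R y))\<^sup>2 = (norm x)\<^sup>2 + t\<^sup>2 * (norm y)\<^sup>2"
proof -
  have "cinner y x = 0"
    using assms cinner_commute[of y x] by simp
  with assms have "cinner (x + t *\<^sub>R y) (x + t *\<^sub>R y) = cinner x x + of_real (t\<^sup>2) * cinner y y"
    by (simp add: cinner_add_left cinner_add_right cinner_scaleR_left cinner_scaleR_right
        power2_eq_square)
  then show ?thesis
    by (simp only: cinner_self of_real_mult[symmetric] of_real_add[symmetric] of_real_eq_iff)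
qed

text \<open>Moving from the maximiser \<open>x0\<close> along the residual \<open>y = A x0 - c x0\<close> raises the
  quadratic form to first order by \<open>2 t |y|\<^sup>2\<close>, while the norm changes only to second
  order; maximality therefore forces \<open>y = 0\<close>.\<close>

lemma hermitian_maximizer_is_eigenvector:
  fixes A :: "complex^'n::finite^'n"
  assumes herm: "hermitian A" and S: "subspace S"
    and smult: "\<And>c x. x \<in> S \<Longrightarrow> c *s x \<in> S" and inv: "\<And>x. x \<in> S \<Longrightarrow> A *v x \<in> S"
    and x0: "x0 \<in> S" "norm x0 = 1"
    and max: "\<And>z. z \<in> S \<Longrightarrow> Re (cinner z (A *v z)) \<le> Re (cinner x0 (A *v x0)) * (norm z)\<^sup>2"
  shows "A *v x0 = of_real (Re (cinner x0 (A *v x0))) *s x0"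
proof -
  define c where "c = Re (cinner x0 (A *v x0))"
  define y where "y = A *v x0 - of_real c *s x0"
  define N where "N = (norm y)\<^sup>2"
  have yS: "y \<in> S"
    unfolding y_def using x0 inv smult S by (simp add: subspace_diff)
  have "cinner x0 (A *v x0) = of_real c"
    using hermitian_cinner_real[OF herm] by (simp add: c_def)
  then have x0y: "cinner x0 y = 0"
    using x0 by (simp add: y_def cinner_diff_right cinner_smult_right cinner_self)
  then have "cinner y x0 = 0"
    using cinner_commute[of y x0] by simp
  moreover have "A *v x0 = y + of_real c *s x0"
    by (simp add: y_def)
  ultimately have yAx0: "Re (cinner y (A *v x0)) = N"
    by (simp add: cinner_add_right cinner_smult_right cinner_self N_def)
  have "(2 * N) * t \<le> (c * N - Re (cinner y (A *v y))) * t\<^sup>2" for t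
  proof -
    have "x0 + t *\<^sub>R y \<in> S"
      using x0 yS S by (simp add: subspace_add subspace_scale)
    then have "c + 2 * t * N + t\<^sup>2 * Re (cinner y (A *v y)) \<le> c * (1 + t\<^sup>2 * N)"
      using max[of "x0 + t *\<^sub>R y"] x0
      by (simp add: hermitian_quadratic_form_add[OF herm] norm_add_scaleR_orthogonal[OF x0y]
          yAx0 c_def N_def)
    then show ?thesis
      by (simp add: algebra_simps)
  qed
  then have "2 * N \<le> 0"
    by (rule nonpos_if_linear_le_quadratic)
  then have "y = 0"
    by (simp add: N_def)
  then show ?thesis
    by (simp add: y_def c_def)
qed

lemma hermitian_eigenvector_in_invariant_subspace:
  fixes A :: "complex^'n::finite^'n"
  assumes "hermitian A" "subspace S"
    and "\<And>c x. x \<in> S \<Longrightarrow> c *s x \<in> S" "\<And>x. x \<in> S \<Longrightarrow> A *v x \<in> S"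
    and "x1 \<in> S" "x1 \<noteq> 0"
  obtains u c where "u \<in> S" "cinner u u = 1" "A *v u = complex_of_real c *s u"
proof -
  obtain x0 where "x0 \<in> S" "norm x0 = 1"
    "\<And>z. z \<in> S \<Longrightarrow> Re (cinner z (A *v z)) \<le> Re (cinner x0 (A *v x0)) * (norm z)\<^sup>2"
    using quadratic_form_attains_max[OF assms(2,5,6)] by blast
  moreover from this have "cinner x0 x0 = 1"
    by (simp add: cinner_self)
  ultimately show ?thesis
    using hermitian_maximizer_is_eigenvector[OF assms(1-4)] that by blast
qed

text \<open>Fewer than \<open>CARD('n)\<close> vectors cannot span: the matrix whose rows are their
  conjugates, padded by a zero row at \<open>a\<close>, is singular and so has a nonzero kernel vector.\<close>

lemma exists_nonzero_orthogonal_to_family: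
  fixes v :: "'n::finite \<Rightarrow> complex^'n"
  assumes "a \<notin> T"
  obtains x where "x \<noteq> 0" "\<forall>j\<in>T. cinner (v j) x = 0"
proof -
  define M :: "complex^'n^'n" where "M = (\<chi> j k. if j \<in> T then cnj (v j $ k) else 0)"
  have Mx: "(M *v x) $ j = (if j \<in> T then cinner (v j) x else 0)" for x j
    by (simp add: M_def matrix_vector_mult_def cinner_def)
  have "\<not> (\<exists>B. B ** M = mat 1)"
  proof
    assume "\<exists>B. B ** M = mat 1"
    then obtain B where "M ** B = mat 1"
      using matrix_left_right_inverse by blast
    moreover have "(M ** B) $ a $ a = 0"
      using assms by (simp add: matrix_matrix_mult_def M_def)
    ultimately show False
      by (simp add: mat_def)
  qed
  then obtain x where x: "M *v x = 0" "x \<noteq> 0"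
    by (auto simp: matrix_left_invertible_ker)
  have "cinner (v j) x = 0" if "j \<in> T" for j
    using Mx[of x j] x(1) that by simp
  with x(2) show ?thesis
    using that by blast
qed

lemma hermitian_eigenfamily_extend:
  fixes A :: "complex^'n::finite^'n" and v :: "'n \<Rightarrow> complex^'n"
  assumes herm: "hermitian A" and "a \<notin> T"
    and eig: "\<forall>i\<in>T. A *v v i = complex_of_real (l i) *s v i"
  obtains u c where "\<forall>j\<in>T. cinner (v j) u = 0" "cinner u u = 1"
    "A *v u = complex_of_real c *s u"
proof -
  define S where "S = {x. \<forall>j\<in>T. cinner (v j) x = 0}"
  have S: "subspace S"
    unfolding S_def by (rule subspace_orthogonal_to_family)
  have smult: "c *s x \<in> S" if "x \<in> S" for c x
    using that by (simp add: S_def cinner_smult_right)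
  have inv: "A *v x \<in> S" if "x \<in> S" for x
  proof -
    have "cinner (v j) (A *v x) = 0" if "j \<in> T" for j
      using \<open>x \<in> S\<close> eig that
      by (simp add: S_def hermitian_cinner[OF herm, symmetric] cinner_smult_left)
    then show ?thesis
      by (simp add: S_def)
  qed
  obtain x1 where "x1 \<noteq> 0" "x1 \<in> S"
    using exists_nonzero_orthogonal_to_family[OF \<open>a \<notin> T\<close>, of v] unfolding S_def by blast
  then obtain u c where "u \<in> S" "cinner u u = 1" "A *v u = complex_of_real c *s u"
    using hermitian_eigenvector_in_invariant_subspace[OF herm S smult inv] by metis
  then show ?thesis
    using that by (simp add: S_def)
qed

theorem hermitian_eigen_decomp_exists:
  fixes A :: "complex^'n::finite^'n"
  assumes herm: "hermitian A"
  obtains v l where "eigen_decomp A v l"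
proof -
  have "\<exists>v l. (\<forall>i\<in>T. \<forall>j\<in>T. cinner (v i) (v j) = (if i = j then 1 else 0)) \<and>
          (\<forall>i\<in>T. A *v v i = complex_of_real (l i) *s v i)" for T :: "'n set"
  proof (induction T rule: infinite_finite_induct)
    case (insert a T)
    then obtain v l where orth: "\<forall>i\<in>T. \<forall>j\<in>T. cinner (v i) (v j) = (if i = j then 1 else 0)"
      and eig: "\<forall>i\<in>T. A *v v i = complex_of_real (l i) *s v i"
      by blast
    obtain u c where vu: "\<forall>j\<in>T. cinner (v j) u = 0" and uu: "cinner u u = 1"
      and Au: "A *v u = complex_of_real c *s u"
      using hermitian_eigenfamily_extend[OF herm \<open>a \<notin> T\<close> eig] by blast
    have uv: "cinner u (v j) = 0" if "j \<in> T" for j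
      using vu that cinner_commute[of u "v j"] by simp
    show ?case
    proof (intro exI[of _ "v(a := u)"] exI[of _ "l(a := c)"] conjI ballI)
      fix i j
      assume "i \<in> insert a T" "j \<in> insert a T"
      then show "cinner ((v(a := u)) i) ((v(a := u)) j) = (if i = j then 1 else 0)"
        using orth vu uv uu \<open>a \<notin> T\<close> by (cases "i = a"; cases "j = a") auto
    next
      fix i
      assume "i \<in> insert a T"
      then show "A *v (v(a := u)) i = complex_of_real ((l(a := c)) i) *s (v(a := u)) i"
        using eig Au by (cases "i = a") auto
    qed
  qed auto
  from this[of UNIV] obtain v l where "orthonormal_family v"
    "\<forall>i. A *v v i = complex_of_real (l i) *s v i"
    unfolding orthonormal_family_def by blast
  then show ?thesis
    using that[of v l] unfolding eigen_decomp_def by blast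
qed

definition tensor_vec :: "complex^'a \<Rightarrow> complex^'b \<Rightarrow> complex^('a::finite \<times> 'b::finite)" where
  "tensor_vec x y = (\<chi> p. x $ fst p * y $ snd p)"

lemma sum_UNIV_prod:
  "(\<Sum>p\<in>(UNIV::('a::finite \<times> 'b::finite) set). f p) = (\<Sum>a\<in>UNIV. \<Sum>b\<in>UNIV. f (a, b))"
  by (simp add: sum.cartesian_product)

lemma kron_mult_tensor_vec: "kron A B *v tensor_vec x y = tensor_vec (A *v x) (B *v y)"
  by (simp add: vec_eq_iff kron_def tensor_vec_def matrix_vector_mult_def sum_UNIV_prod
      sum_product ac_simps)

lemma cinner_tensor_vec: "cinner (tensor_vec x y) (tensor_vec x' y') = cinner x x' * cinner y y'"
  by (simp add: cinner_def tensor_vec_def sum_UNIV_prod sum_product ac_simps)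

lemma tensor_vec_smult_left: "tensor_vec (c *s x) y = c *s tensor_vec x y"
  by (simp add: vec_eq_iff tensor_vec_def ac_simps)

lemma tensor_vec_smult_right: "tensor_vec x (c *s y) = c *s tensor_vec x y"
  by (simp add: vec_eq_iff tensor_vec_def ac_simps)

lemma tensor_vec_scaleR_right: "tensor_vec x (r *\<^sub>R y) = r *\<^sub>R tensor_vec x y"
  by (simp add: vec_eq_iff tensor_vec_def scaleR_complex ac_simps)

lemma orthonormal_family_tensor_vec:
  assumes "orthonormal_family v" "orthonormal_family w"
  shows "orthonormal_family (\<lambda>p. tensor_vec (v (fst p)) (w (snd p)))"
  using assms unfolding orthonormal_family_def by (auto simp: cinner_tensor_vec prod_eq_iff)

lemma eigen_decomp_kron:
  assumes "eigen_decomp A v l" "eigen_decomp B w m"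
  shows "eigen_decomp (kron A B) (\<lambda>p. tensor_vec (v (fst p)) (w (snd p))) (\<lambda>p. l (fst p) * m (snd p))"
  using assms orthonormal_family_tensor_vec[of v w] unfolding eigen_decomp_def
  by (auto simp: kron_mult_tensor_vec tensor_vec_smult_left tensor_vec_smult_right
      vector_smult_assoc mult.commute)

lemma eigen_decomp_kron_sum:
  assumes "eigen_decomp A v l" "eigen_decomp B w m"
  shows "eigen_decomp (kron A (mat 1) + kron (mat 1) B) (\<lambda>p. tensor_vec (v (fst p)) (w (snd p)))
    (\<lambda>p. l (fst p) + m (snd p))"
  using assms orthonormal_family_tensor_vec[of v w] unfolding eigen_decomp_def
  by (auto simp: matrix_vector_mult_add_rdistrib kron_mult_tensor_vec tensor_vec_smult_left
      tensor_vec_smult_right vector_sadd_rdistrib)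

lemma trace_kron: "trace (kron A B) = trace A * trace B"
  by (simp add: trace_def kron_def sum_UNIV_prod sum_product)

lemma trace_mult_kron_id: "trace (R ** kron A (mat 1)) = trace (A ** ptrace_B R)"
proof -
  have "trace (R ** kron A (mat 1)) = (\<Sum>a\<in>UNIV. \<Sum>k\<in>UNIV. \<Sum>b\<in>UNIV. R $ (a, k) $ (b, k) * A $ b $ a)"
    by (simp add: trace_def matrix_matrix_mult_def kron_def sum_UNIV_prod mat_def if_distrib
        if_distribR sum.delta cong: if_cong)
  also have "\<dots> = (\<Sum>a\<in>UNIV. \<Sum>b\<in>UNIV. \<Sum>k\<in>UNIV. R $ (a, k) $ (b, k) * A $ b $ a)"
    by (intro sum.cong refl) (rule sum.swap)
  also have "\<dots> = trace (A ** ptrace_B R)"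
    by (simp add: trace_def matrix_matrix_mult_def ptrace_B_def sum_distrib_left sum_distrib_right
        ac_simps) (rule sum.swap)
  finally show ?thesis .
qed

section \<open>Gibbs states\<close>

lemma partition_fn_eq_sum:
  assumes "eigen_decomp H v l"
  shows "partition_fn \<beta> H = (\<Sum>i\<in>UNIV. exp (- \<beta> * l i))"
  using assms unfolding partition_fn_def mat_exp_scaleR_eq_spectral_op[OF assms]
  by (simp add: trace_spectral_op eigen_decomp_def)

lemma partition_fn_pos: "hermitian H \<Longrightarrow> partition_fn \<beta> H > 0"
proof -
  assume "hermitian H"
  then obtain v l where "eigen_decomp H v l"
    by (rule hermitian_eigen_decomp_exists)
  then show ?thesis
    by (simp add: partition_fn_eq_sum sum_pos)
qed

lemma eigen_decomp_gibbs:
  assumes "eigen_decomp H v l"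
  shows "eigen_decomp (gibbs \<beta> H) v (\<lambda>i. exp (- \<beta> * l i) / partition_fn \<beta> H)"
proof -
  have "gibbs \<beta> H = spectral_op (\<lambda>i. exp (- \<beta> * l i) / partition_fn \<beta> H) v"
    unfolding gibbs_def mat_exp_scaleR_eq_spectral_op[OF assms]
    by (simp add: spectral_op_def scaleR_sum_right)
  moreover have "orthonormal_family v"
    using assms by (simp add: eigen_decomp_def)
  ultimately show ?thesis
    by (simp only: eigen_decomp_spectral_op)
qed

lemma sum_boltzmann_weights:
  fixes E :: "'a::finite \<Rightarrow> real"
  shows "(\<Sum>i\<in>UNIV. exp (- \<beta> * E i) / (\<Sum>j\<in>UNIV. exp (- \<beta> * E j))) = 1"
proof -
  have "(\<Sum>j\<in>UNIV. exp (- \<beta> * E j)) > 0"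
    by (simp add: sum_pos)
  then show ?thesis
    by (simp add: sum_divide_distrib[symmetric])
qed

lemma trace_gibbs: "hermitian H \<Longrightarrow> trace (gibbs \<beta> H) = 1"
proof -
  assume "hermitian H"
  then obtain v l where ev: "eigen_decomp H v l"
    by (rule hermitian_eigen_decomp_exists)
  have "trace (gibbs \<beta> H) = of_real (\<Sum>i\<in>UNIV. exp (- \<beta> * l i) / partition_fn \<beta> H)"
    by (rule trace_eq_sum_eigenvalues[OF eigen_decomp_gibbs[OF ev]])
  also have "(\<Sum>i\<in>UNIV. exp (- \<beta> * l i) / partition_fn \<beta> H) = 1"
    unfolding partition_fn_eq_sum[OF ev] by (rule sum_boltzmann_weights)
  finally show ?thesis
    by simp
qed

lemma mat_ln_thermal:
  fixes u :: "'n::finite \<Rightarrow> complex^'n"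
  assumes "eigen_decomp \<rho> u (\<lambda>j. exp (- \<beta> * E j) / Z)" "eigen_decomp H u E" "Z > 0"
  shows "mat_ln \<rho> = (- \<beta>) *\<^sub>R H + (- ln Z) *\<^sub>R mat 1"
proof -
  have "mat_ln \<rho> = spectral_op (\<lambda>j. ln (exp (- \<beta> * E j) / Z)) u"
    unfolding mat_ln_def by (rule mat_fun_eq_spectral_op[OF assms(1)])
  also have "\<dots> = spectral_op (\<lambda>j. - \<beta> * E j + - ln Z) u"
    using assms(3) by (simp add: ln_div)
  also have "\<dots> = (- \<beta>) *\<^sub>R H + (- ln Z) *\<^sub>R mat 1"
    using assms(2) by (simp only: spectral_op_affine eigen_decomp_def
        eigen_decomp_imp_spectral_op[OF assms(2), symmetric])
  finally show ?thesis .
qed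

lemma trace_mult_mat_ln_thermal:
  fixes u :: "'n::finite \<Rightarrow> complex^'n"
  assumes "eigen_decomp \<rho> u (\<lambda>j. exp (- \<beta> * E j) / Z)" "eigen_decomp H u E" "Z > 0"
    and "trace \<sigma> = 1"
  shows "Re (trace (\<sigma> ** mat_ln \<rho>)) = - \<beta> * Re (trace (\<sigma> ** H)) - ln Z"
proof -
  have eq: "\<sigma> ** mat_ln \<rho> = (- \<beta>) *\<^sub>R (\<sigma> ** H) + (- ln Z) *\<^sub>R \<sigma>"
    by (simp only: mat_ln_thermal[OF assms(1-3)] matrix_add_ldistrib matrix_scalar_ac
        scalar_matrix_assoc[symmetric] matrix_mul_rid)
  show ?thesis
    unfolding eq trace_add trace_scaleR using assms(4) by simp
qed

lemma trace_mult_mat_ln_gibbs: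
  assumes "hermitian H" "trace \<sigma> = 1"
  shows "Re (trace (\<sigma> ** mat_ln (gibbs \<beta> H))) = - \<beta> * Re (trace (\<sigma> ** H)) - ln (partition_fn \<beta> H)"
proof -
  obtain v l where ev: "eigen_decomp H v l"
    using hermitian_eigen_decomp_exists[OF assms(1)] by blast
  show ?thesis
    using trace_mult_mat_ln_thermal[OF eigen_decomp_gibbs[OF ev] ev _ assms(2)]
      partition_fn_pos[OF assms(1)] by blast
qed

text \<open>The product of two Gibbs states is the Gibbs state of the non-interacting sum of the
  Hamiltonians, with partition function \<open>Z\<^sub>A Z\<^sub>B\<close>.\<close>

lemma trace_mult_mat_ln_gibbs_kron:
  fixes A :: "complex^'a::finite^'a" and B :: "complex^'b::finite^'b"
  assumes "hermitian A" "hermitian B" "trace \<sigma> = 1"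
  shows "Re (trace (\<sigma> ** mat_ln (kron (gibbs \<beta> A) (gibbs \<beta> B)))) =
    - \<beta> * Re (trace (\<sigma> ** (kron A (mat 1) + kron (mat 1) B)))
    - ln (partition_fn \<beta> A * partition_fn \<beta> B)"
proof -
  obtain v l where ev: "eigen_decomp A v l"
    using hermitian_eigen_decomp_exists[OF assms(1)] by blast
  obtain w m where ew: "eigen_decomp B w m"
    using hermitian_eigen_decomp_exists[OF assms(2)] by blast
  define ZA where "ZA = partition_fn \<beta> A"
  define ZB where "ZB = partition_fn \<beta> B"
  have Z: "ZA > 0" "ZB > 0"
    using partition_fn_pos assms(1,2) by (simp_all add: ZA_def ZB_def)
  have product: "(\<lambda>p. exp (- \<beta> * l (fst p)) / ZA * (exp (- \<beta> * m (snd p)) / ZB)) =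
      (\<lambda>p. exp (- \<beta> * (l (fst p) + m (snd p))) / (ZA * ZB))"
    by (simp add: fun_eq_iff exp_add[symmetric] algebra_simps)
  have "eigen_decomp (kron (gibbs \<beta> A) (gibbs \<beta> B)) (\<lambda>p. tensor_vec (v (fst p)) (w (snd p)))
      (\<lambda>p. exp (- \<beta> * l (fst p)) / ZA * (exp (- \<beta> * m (snd p)) / ZB))"
    unfolding ZA_def ZB_def
    by (rule eigen_decomp_kron[OF eigen_decomp_gibbs[OF ev] eigen_decomp_gibbs[OF ew]])
  then have "eigen_decomp (kron (gibbs \<beta> A) (gibbs \<beta> B)) (\<lambda>p. tensor_vec (v (fst p)) (w (snd p)))
      (\<lambda>p. exp (- \<beta> * (l (fst p) + m (snd p))) / (ZA * ZB))"
    by (simp only: product)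
  from trace_mult_mat_ln_thermal[OF this eigen_decomp_kron_sum[OF ev ew] _ assms(3)] Z
  show ?thesis
    by (simp add: ZA_def ZB_def)
qed

lemma sum_boltzmann_xlnx:
  fixes E :: "'a::finite \<Rightarrow> real" and \<beta> :: real
  defines "Z \<equiv> \<Sum>i\<in>UNIV. exp (- \<beta> * E i)"
  shows "(\<Sum>i\<in>UNIV. exp (- \<beta> * E i) / Z * ln (exp (- \<beta> * E i) / Z)) =
    - \<beta> * (\<Sum>i\<in>UNIV. exp (- \<beta> * E i) / Z * E i) - ln Z"
proof -
  have "Z > 0"
    unfolding Z_def by (simp add: sum_pos)
  then have "(\<Sum>i\<in>UNIV. exp (- \<beta> * E i) / Z * ln (exp (- \<beta> * E i) / Z)) =
      (\<Sum>i\<in>UNIV. - \<beta> * (exp (- \<beta> * E i) / Z * E i) - ln Z * (exp (- \<beta> * E i) / Z))"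
    by (simp add: ln_div algebra_simps diff_divide_distrib)
  also have "\<dots> = - \<beta> * (\<Sum>i\<in>UNIV. exp (- \<beta> * E i) / Z * E i)
      - ln Z * (\<Sum>i\<in>UNIV. exp (- \<beta> * E i) / Z)"
    by (simp only: sum_subtractf sum_distrib_left)
  also have "(\<Sum>i\<in>UNIV. exp (- \<beta> * E i) / Z) = 1"
    using \<open>Z > 0\<close> by (simp add: sum_divide_distrib[symmetric] Z_def)
  finally show ?thesis
    by simp
qed

lemma exp_free_energy_diff:
  assumes "\<beta> \<noteq> 0" "hermitian A" "hermitian B"
  shows "exp (- \<beta> * (free_energy \<beta> A - free_energy \<beta> B)) = partition_fn \<beta> A / partition_fn \<beta> B"
proof -
  have "- \<beta> * (free_energy \<beta> A - free_energy \<beta> B) = ln (partition_fn \<beta> A) - ln (partition_fn \<beta> B)"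
    using assms(1) by (simp add: free_energy_def field_simps)
  then show ?thesis
    using partition_fn_pos[OF assms(2)] partition_fn_pos[OF assms(3)] by (simp add: exp_diff)
qed

section \<open>The guessed state\<close>

lemma eigen_decomp_unitary_mixture:
  assumes U: "unitary_mat U" and oe: "orthonormal_family e" and ew: "eigen_decomp \<tau> w q"
  shows "eigen_decomp (\<Sum>i\<in>UNIV. p i *\<^sub>R (U ** kron (ketbra (e i) (e i)) \<tau> ** adjoint_mat U))
    (\<lambda>j. U *v tensor_vec (e (fst j)) (w (snd j))) (\<lambda>j. p (fst j) * q (snd j))"
proof -
  have ow: "orthonormal_family w" and \<tau>w: "\<And>k. \<tau> *v w k = complex_of_real (q k) *s w k"
    using ew by (auto simp: eigen_decomp_def)
  have rotated: "(U ** kron (ketbra (e i) (e i)) \<tau> ** adjoint_mat U) *v (U *v tensor_vec (e j) (w k))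
      = (if i = j then q k *\<^sub>R (U *v tensor_vec (e j) (w k)) else 0)" for i j k
    using oe unfolding orthonormal_family_def
    by (simp add: matrix_vector_mul_assoc[symmetric] unitary_adjoint_mult_vec[OF U]
        kron_mult_tensor_vec ketbra_mult_vec \<tau>w tensor_vec_smult_left tensor_vec_smult_right
        matrix_vector_mult_smult of_real_smult tensor_vec_scaleR_right
        matrix_vector_mult_scaleR_complex)
  have "(\<Sum>i\<in>UNIV. p i *\<^sub>R (U ** kron (ketbra (e i) (e i)) \<tau> ** adjoint_mat U))
      *v (U *v tensor_vec (e j) (w k)) = (p j * q k) *\<^sub>R (U *v tensor_vec (e j) (w k))" for j k
    by (simp add: sum_matrix_vector_mult scaleR_matrix_vector_mult rotated if_distrib cong: if_cong)
  moreover have "orthonormal_family (\<lambda>j. U *v tensor_vec (e (fst j)) (w (snd j)))"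
    using orthonormal_family_tensor_vec[OF oe ow]
    by (simp add: orthonormal_family_def unitary_cinner[OF U])
  ultimately show ?thesis
    unfolding eigen_decomp_def of_real_smult by auto
qed

lemma trace_unitary_mixture:
  assumes "unitary_mat U" "orthonormal_family e" "trace \<tau> = 1" "(\<Sum>i\<in>UNIV. p i) = 1"
  shows "trace (\<Sum>i\<in>UNIV. p i *\<^sub>R (U ** kron (ketbra (e i) (e i)) \<tau> ** adjoint_mat U)) = 1"
  using assms
  by (simp add: trace_sum trace_scaleR unitary_conj_trace trace_kron trace_ketbra
      orthonormal_family_def scaleR_complex flip: of_real_sum)

lemma trace_unitary_mixture_mult_kron_id:
  "trace ((\<Sum>i\<in>UNIV. p i *\<^sub>R (U ** kron (\<rho> i) \<tau> ** adjoint_mat U)) ** kron A (mat 1)) =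
    (\<Sum>i\<in>UNIV. p i *\<^sub>R trace (A ** channel U \<tau> (\<rho> i)))"
  by (simp add: matrix_mult_sum_left scalar_matrix_assoc[symmetric] trace_sum trace_scaleR
      trace_mult_kron_id channel_def)

lemma sum_xlnx_product:
  fixes p :: "'a::finite \<Rightarrow> real" and q :: "'b::finite \<Rightarrow> real"
  assumes "(\<Sum>i\<in>UNIV. p i) = 1" "(\<Sum>k\<in>UNIV. q k) = 1"
  shows "(\<Sum>j\<in>UNIV. p (fst j) * q (snd j) * ln (p (fst j) * q (snd j))) =
    (\<Sum>i\<in>UNIV. p i * ln (p i)) + (\<Sum>k\<in>UNIV. q k * ln (q k))"
proof -
  have "x * y * ln (x * y) = y * (x * ln x) + x * (y * ln y)" for x y :: real
    by (cases "x = 0 \<or> y = 0") (auto simp: ln_mult algebra_simps)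
  then have "(\<Sum>j\<in>UNIV. p (fst j) * q (snd j) * ln (p (fst j) * q (snd j))) =
      (\<Sum>i\<in>UNIV. \<Sum>k\<in>UNIV. q k * (p i * ln (p i)) + p i * (q k * ln (q k)))"
    by (simp add: sum_UNIV_prod algebra_simps)
  also have "\<dots> = (\<Sum>i\<in>UNIV. p i * ln (p i)) + (\<Sum>k\<in>UNIV. q k * ln (q k))"
    using assms
    by (simp add: sum.distrib sum_distrib_right[symmetric] sum_distrib_left[symmetric])
  finally show ?thesis .
qed

lemma trace_xlnx_unitary_mixture:
  assumes "unitary_mat U" "orthonormal_family e" "eigen_decomp \<tau> w q"
    and "(\<Sum>i\<in>UNIV. p i) = 1" "(\<Sum>k\<in>UNIV. q k) = 1"
  defines "\<Theta> \<equiv> \<Sum>i\<in>UNIV. p i *\<^sub>R (U ** kron (ketbra (e i) (e i)) \<tau> ** adjoint_mat U)"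
  shows "Re (trace (\<Theta> ** mat_ln \<Theta>)) = (\<Sum>i\<in>UNIV. p i * ln (p i)) + Re (trace (\<tau> ** mat_ln \<tau>))"
  unfolding \<Theta>_def
  using trace_mult_mat_ln_self[OF eigen_decomp_unitary_mixture[OF assms(1-3)]]
    trace_mult_mat_ln_self[OF assms(3)] sum_xlnx_product[OF assms(4,5)]
  by simp

lemma trace_xlnx_guessed_state:
  fixes HB :: "complex^'b::finite^'b" and U :: "complex^('s::finite \<times> 'b)^('s \<times> 'b)"
    and e :: "'s \<Rightarrow> complex^'s" and E :: "'s \<Rightarrow> real"
  assumes herm: "hermitian HB" and U: "unitary_mat U" and oe: "orthonormal_family e"
    and Z: "Z = (\<Sum>i\<in>UNIV. exp (- \<beta> * E i))" and p: "p = (\<lambda>i. exp (- \<beta> * E i) / Z)"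
    and \<Theta>: "\<Theta> = (\<Sum>i\<in>UNIV. p i *\<^sub>R (U ** kron (ketbra (e i) (e i)) (gibbs \<beta> HB) ** adjoint_mat U))"
  shows "Re (trace (\<Theta> ** mat_ln \<Theta>)) = - \<beta> * (\<Sum>i\<in>UNIV. p i * E i) - ln Z
    - \<beta> * Re (trace (HB ** gibbs \<beta> HB)) - ln (partition_fn \<beta> HB)"
proof -
  obtain w m where ew: "eigen_decomp HB w m"
    using hermitian_eigen_decomp_exists[OF herm] by blast
  have "(\<Sum>k\<in>UNIV. exp (- \<beta> * m k) / partition_fn \<beta> HB) = 1"
    unfolding partition_fn_eq_sum[OF ew] by (rule sum_boltzmann_weights)
  moreover have "(\<Sum>i\<in>UNIV. p i) = 1"
    unfolding p Z by (rule sum_boltzmann_weights)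
  ultimately have "Re (trace (\<Theta> ** mat_ln \<Theta>)) =
      (\<Sum>i\<in>UNIV. p i * ln (p i)) + Re (trace (gibbs \<beta> HB ** mat_ln (gibbs \<beta> HB)))"
    unfolding \<Theta> using trace_xlnx_unitary_mixture[OF U oe eigen_decomp_gibbs[OF ew]] by blast
  also have "(\<Sum>i\<in>UNIV. p i * ln (p i)) = - \<beta> * (\<Sum>i\<in>UNIV. p i * E i) - ln Z"
    unfolding p Z by (rule sum_boltzmann_xlnx)
  also have "Re (trace (gibbs \<beta> HB ** mat_ln (gibbs \<beta> HB))) =
      - \<beta> * Re (trace (HB ** gibbs \<beta> HB)) - ln (partition_fn \<beta> HB)"
    using trace_mult_mat_ln_gibbs[OF herm trace_gibbs[OF herm]] by (simp add: trace_mul_sym[of HB])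
  finally show ?thesis
    by simp
qed

lemma rel_entropy_guessed_state:
  fixes Ht :: "complex^'s::finite^'s" and HB :: "complex^'b::finite^'b"
    and U :: "complex^('s \<times> 'b)^('s \<times> 'b)" and e :: "'s \<Rightarrow> complex^'s" and \<beta> :: real
  assumes herm: "hermitian Ht" "hermitian HB" and U: "unitary_mat U" and oe: "orthonormal_family e"
    and Et: "Et = (\<lambda>i. Re (trace (Ht ** channel U (gibbs \<beta> HB) (ketbra (e i) (e i)))))"
    and Zt': "Zt' = (\<Sum>i\<in>UNIV. exp (- \<beta> * Et i))"
    and \<Theta>: "\<Theta> = (\<Sum>i\<in>UNIV. (exp (- \<beta> * Et i) / Zt') *\<^sub>R
                 (U ** kron (ketbra (e i) (e i)) (gibbs \<beta> HB) ** adjoint_mat U))"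
  shows "rel_entropy \<Theta> (kron (gibbs \<beta> Ht) (gibbs \<beta> HB)) = ln (partition_fn \<beta> Ht) - ln Zt'
    - \<beta> * (Re (trace (HB ** gibbs \<beta> HB)) - Re (trace (kron (mat 1) HB ** \<Theta>)))"
proof -
  define p where "p = (\<lambda>i. exp (- \<beta> * Et i) / Zt')"
  have \<Theta>_mixture: "\<Theta> = (\<Sum>i\<in>UNIV. p i *\<^sub>R (U ** kron (ketbra (e i) (e i)) (gibbs \<beta> HB) ** adjoint_mat U))"
    by (simp add: \<Theta> p_def)
  have "trace \<Theta> = 1"
    unfolding \<Theta>_mixture p_def Zt'
    by (rule trace_unitary_mixture[OF U oe trace_gibbs[OF herm(2)] sum_boltzmann_weights])
  have "Re (trace (\<Theta> ** kron Ht (mat 1))) = (\<Sum>i\<in>UNIV. p i * Et i)"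
    unfolding \<Theta>_mixture trace_unitary_mixture_mult_kron_id by (simp add: Et)
  moreover have "trace (\<Theta> ** (kron Ht (mat 1) + kron (mat 1) HB)) =
      trace (\<Theta> ** kron Ht (mat 1)) + trace (kron (mat 1) HB ** \<Theta>)"
    by (simp only: matrix_add_ldistrib trace_add trace_mul_sym[of \<Theta> "kron (mat 1) HB"])
  ultimately have "Re (trace (\<Theta> ** mat_ln (kron (gibbs \<beta> Ht) (gibbs \<beta> HB)))) =
      - \<beta> * ((\<Sum>i\<in>UNIV. p i * Et i) + Re (trace (kron (mat 1) HB ** \<Theta>)))
      - ln (partition_fn \<beta> Ht * partition_fn \<beta> HB)"
    using trace_mult_mat_ln_gibbs_kron[OF herm \<open>trace \<Theta> = 1\<close>, of \<beta>] by simp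
  moreover have "ln (partition_fn \<beta> Ht * partition_fn \<beta> HB) =
      ln (partition_fn \<beta> Ht) + ln (partition_fn \<beta> HB)"
    using partition_fn_pos[OF herm(1)] partition_fn_pos[OF herm(2)] by (rule ln_mult_pos)
  ultimately show ?thesis
    using trace_xlnx_guessed_state[OF herm(2) U oe Zt' p_def \<Theta>_mixture]
    by (simp add: rel_entropy_def algebra_simps)
qed

theorem theorem1:
  fixes H0 Ht :: "complex^'s::finite^'s"
    and HB :: "complex^'b::finite^'b"
    and U :: "complex^('s \<times> 'b)^('s \<times> 'b)"
    and e :: "'s \<Rightarrow> complex^'s" and eps :: "'s \<Rightarrow> real"
    and \<beta> :: real
  assumes "hermitian H0" and "hermitian Ht" and "hermitian HB"
    and "unitary_mat U"
    and "\<beta> > 0"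
    and "eigen_decomp H0 e eps"
  shows
    "let \<tau>B = gibbs \<beta> HB;
         \<Phi> = channel U \<tau>B;
         Et = (\<lambda>i. Re (trace (Ht ** \<Phi> (ketbra (e i) (e i)))));
         \<Delta>E = (\<lambda>i. Et i - eps i);
         Zt' = (\<Sum>i\<in>UNIV. exp (- \<beta> * Et i));
         \<Theta> = (\<Sum>i\<in>UNIV. (exp (- \<beta> * Et i) / Zt') *\<^sub>R
                   (U ** kron (ketbra (e i) (e i)) \<tau>B ** adjoint_mat U));
         Q = Re (trace (HB ** \<tau>B)) - Re (trace (kron (mat 1) HB ** \<Theta>));
         W = (\<lambda>i. \<Delta>E i - Q);
         \<Delta>F = free_energy \<beta> Ht - free_energy \<beta> H0
     in (\<Sum>i\<in>UNIV. exp (- \<beta> * eps i) / partition_fn \<beta> H0 * exp (- \<beta> * W i))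
        = exp (- \<beta> * \<Delta>F) * exp (- rel_entropy \<Theta> (kron (gibbs \<beta> Ht) \<tau>B))"
proof -
  define Et where "Et = (\<lambda>i. Re (trace (Ht ** channel U (gibbs \<beta> HB) (ketbra (e i) (e i)))))"
  define Zt' where "Zt' = (\<Sum>i\<in>UNIV. exp (- \<beta> * Et i))"
  define \<Theta> where "\<Theta> = (\<Sum>i\<in>UNIV. (exp (- \<beta> * Et i) / Zt') *\<^sub>R
                   (U ** kron (ketbra (e i) (e i)) (gibbs \<beta> HB) ** adjoint_mat U))"
  define Q where "Q = Re (trace (HB ** gibbs \<beta> HB)) - Re (trace (kron (mat 1) HB ** \<Theta>))"
  have "orthonormal_family e"
    using assms(6) by (simp add: eigen_decomp_def)
  from rel_entropy_guessed_state[OF assms(2-4) this Et_def Zt'_def \<Theta>_def]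
  have "exp (- rel_entropy \<Theta> (kron (gibbs \<beta> Ht) (gibbs \<beta> HB))) = exp (ln Zt' + \<beta> * Q - ln (partition_fn \<beta> Ht))"
    by (simp add: Q_def)
  also have "\<dots> = Zt' * exp (\<beta> * Q) / partition_fn \<beta> Ht"
    using partition_fn_pos[OF assms(2)] by (simp add: Zt'_def sum_pos exp_add exp_diff)
  finally have rhs: "exp (- \<beta> * (free_energy \<beta> Ht - free_energy \<beta> H0))
      * exp (- rel_entropy \<Theta> (kron (gibbs \<beta> Ht) (gibbs \<beta> HB))) = Zt' * exp (\<beta> * Q) / partition_fn \<beta> H0"
    using exp_free_energy_diff[of \<beta> Ht H0] assms(1,2,5) partition_fn_pos[OF assms(2), of \<beta>] by simp
  have initial_energies_cancel:
    "exp (- \<beta> * eps i) / partition_fn \<beta> H0 * exp (- \<beta> * (Et i - eps i - Q)) =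
      exp (- \<beta> * Et i) * exp (\<beta> * Q) / partition_fn \<beta> H0" for i
    by (simp add: mult_exp_exp algebra_simps)
  have lhs: "(\<Sum>i\<in>UNIV. exp (- \<beta> * eps i) / partition_fn \<beta> H0 * exp (- \<beta> * (Et i - eps i - Q))) =
      Zt' * exp (\<beta> * Q) / partition_fn \<beta> H0"
    by (simp only: initial_energies_cancel Zt'_def sum_distrib_right sum_divide_distrib)
  show ?thesis
    using lhs rhs unfolding Let_def Q_def \<Theta>_def Zt'_def Et_def by simp
qed

end
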